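(* Let $d\ge 1$ and let $(D,\mathbf{m},E)\in\mathbb{R}\times\mathbb{R}^d\times\mathbb{R}$ satisfy $D>0$ and $E-\sqrt{D^2+|\mathbf{m}|^2}>0$. For $h>1$ define $T(h)=\frac{3h-8}{24}+\frac{\sqrt{(3h+8)^2-96}}{24}$, and for $\Pi\ge E$ define $h(\Pi)=\sqrt{\Pi^2-|\mathbf{m}|^2}/D$ and $S(\Pi)=\Pi^2-\Pi E-D^2 h(\Pi)T(h(\Pi))$. Let $\Pi_*$ denote the unique real root of $S$ in $(E,\infty)$. Then for any $\Pi_r\in[E,\Pi_* )$, the Newton–Raphson iterate \[ \Pi_{r+1}=\Pi_r-\frac{S(\Pi_r)}{S'(\Pi_r)} \] satisfies $\Pi_{r+1}>\Pi_r$.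
   Context: This is the Newton–Raphson iteration (started from $\Pi_0=E$) used to recover primitive variables from conservative variables $(D,\mathbf{m},E)$ (relativistic density, momentum density, energy density) for the relativistic hydrodynamics equations with the equation of state $h=\frac{2(6p^2+4p\rho+\rho^2)}{\rho(3p+2\rho)}$, for which $p=\rho T(h)$ and $\Pi=E+p$. For $\Pi\ge E$ one has $h(\Pi)>1$, and $S$ has exactly one real root in $(E,\infty)$. *)

theory Defs
  imports "HOL-Analysis.Analysis"
begin

definition T_fun :: "real \<Rightarrow> real" where
  "T_fun h = (3*h - 8)/24 + sqrt ((3*h + 8)^2 - 96)/24"

definition h_fun :: "real \<Rightarrow> real^'n \<Rightarrow> real \<Rightarrow> real" where
  "h_fun D m P = sqrt (P^2 - (norm m)^2) / D"

definition S_fun :: "real \<Rightarrow> real^'n \<Rightarrow> real \<Rightarrow> real \<Rightarrow> real" where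
  "S_fun D m E P = P^2 - P*E - D^2 * h_fun D m P * T_fun (h_fun D m P)"

end

theory Submission
  imports Defs
begin

text \<open>Write \<open>h = h(\<Pi>)\<close>. Since \<open>D\<^sup>2 h'(\<Pi>) = \<Pi>/h\<close>, the chain rule gives
  \<open>S'(\<Pi>) = 2\<Pi> - E - \<Pi> (T(h)/h + T'(h))\<close>. For \<open>h > 1\<close> one has \<open>T(h) < h/4\<close> and
  \<open>T'(h) < 1/2\<close>, so \<open>S'(\<Pi>) > 5\<Pi>/4 - E > 0\<close> on \<open>[E,\<infinity>)\<close>. Hence \<open>S\<close> is strictly
  increasing there, \<open>S(\<Pi>\<^sub>r) < S(\<Pi>\<^sub>*) = 0 < S'(\<Pi>\<^sub>r)\<close>, and the Newton correction
  \<open>-S(\<Pi>\<^sub>r)/S'(\<Pi>\<^sub>r)\<close> is positive.\<close>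

definition T_deriv :: "real \<Rightarrow> real" where
  "T_deriv h = 1/8 + (3*h + 8) / (8 * sqrt ((3*h + 8)^2 - 96))"

lemma T_fun_has_real_derivative:
  assumes "(3*h + 8)^2 > 96"
  shows "(T_fun has_real_derivative T_deriv h) (at h)"
  unfolding T_fun_def[abs_def] T_deriv_def
  using assms by (auto intro!: derivative_eq_intros simp: field_simps)

lemma T_fun_less_quarter:
  assumes "h > -8/3"
  shows "T_fun h < h/4"
proof -
  have "sqrt ((3*h + 8)^2 - 96) < sqrt ((3*h + 8)^2)"
    by (rule real_sqrt_less_mono) simp
  also have "\<dots> = 3*h + 8"
    using assms by simp
  finally show ?thesis
    unfolding T_fun_def by (simp add: field_simps)
qed

lemma T_deriv_less_half:
  assumes "h > 1"
  shows "T_deriv h < 1/2"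
proof -
  define x where "x = 3*h + 8"
  have "x > 11"
    using assms by (simp add: x_def)
  then have "x^2 > 11^2"
    by (intro power_strict_mono) auto
  then have "(x/3)^2 < x^2 - 96"
    by (simp add: power_divide)
  then have root: "x/3 < sqrt (x^2 - 96)"
    by (rule real_less_rsqrt)
  moreover have "sqrt (x^2 - 96) > 0"
    using \<open>x > 11\<close> root by linarith
  ultimately have "x / (8 * sqrt (x^2 - 96)) < 3/8"
    by (simp add: field_simps)
  then show ?thesis
    unfolding T_deriv_def x_def[symmetric] by simp
qed

lemma h_fun_has_real_derivative:
  fixes m :: "real^'n"
  assumes "D \<noteq> 0" and "norm m < P"
  shows "(h_fun D m has_real_derivative P / (D * sqrt (P^2 - (norm m)^2))) (at P)"
proof -
  have "(norm m)^2 < P^2"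
    using assms(2) by (intro power_strict_mono) auto
  then show ?thesis
    unfolding h_fun_def[abs_def]
    using assms by (auto intro!: derivative_eq_intros simp: field_simps)
qed

lemma h_fun_gt_one:
  fixes m :: "real^'n"
  assumes "D > 0" and "sqrt (D^2 + (norm m)^2) < P"
  shows "h_fun D m P > 1"
proof -
  have "(sqrt (D^2 + (norm m)^2))^2 < P^2"
    using assms(2) by (intro power_strict_mono) auto
  then have "D^2 + (norm m)^2 < P^2"
    by simp
  then have "D < sqrt (P^2 - (norm m)^2)"
    by (intro real_less_rsqrt) simp
  then show ?thesis
    unfolding h_fun_def using assms(1) by simp
qed

lemma S_fun_has_real_derivative:
  fixes m :: "real^'n"
  assumes "D > 0" and "sqrt (D^2 + (norm m)^2) < P"
  defines "h \<equiv> h_fun D m P"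
  shows "(S_fun D m E has_real_derivative 2*P - E - P * (T_fun h / h + T_deriv h)) (at P)"
proof -
  define h' where "h' = P / (D * sqrt (P^2 - (norm m)^2))"
  have "norm m \<le> sqrt (D^2 + (norm m)^2)"
    by (rule real_le_rsqrt) simp
  then have h': "(h_fun D m has_real_derivative h') (at P)"
    unfolding h'_def using assms(1,2) by (intro h_fun_has_real_derivative) linarith+
  have "h > 1"
    unfolding h_def using assms(1,2) by (rule h_fun_gt_one)
  then have "(3*h + 8)^2 > 11^2"
    by (intro power_strict_mono) auto
  then have "(T_fun has_real_derivative T_deriv h) (at (h_fun D m P))"
    unfolding h_def[symmetric] by (intro T_fun_has_real_derivative) simp
  from DERIV_chain2[OF this h']
  have T_h: "((\<lambda>P. T_fun (h_fun D m P)) has_real_derivative T_deriv h * h') (at P)" .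
  have "(S_fun D m E has_real_derivative 2*P - E - (D^2 * h') * (T_fun h + h * T_deriv h)) (at P)"
    unfolding S_fun_def[abs_def]
    by (rule derivative_eq_intros h' T_h refl)+ (simp add: h_def algebra_simps)
  moreover have "D^2 * h' = P / h"
    using \<open>h > 1\<close> assms(1) unfolding h_def h_fun_def h'_def
    by (simp add: power2_eq_square field_simps)
  moreover have "P / h * (T_fun h + h * T_deriv h) = P * (T_fun h / h + T_deriv h)"
    using \<open>h > 1\<close> by (simp add: field_simps)
  ultimately show ?thesis
    by simp
qed

lemma S_fun_has_positive_derivative:
  fixes m :: "real^'n"
  assumes "D > 0" and "sqrt (D^2 + (norm m)^2) < E" and "E \<le> P"
  shows "\<exists>y. (S_fun D m E has_real_derivative y) (at P) \<and> y > 0"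
proof -
  define h where "h = h_fun D m P"
  have P: "sqrt (D^2 + (norm m)^2) < P"
    using assms(2,3) by linarith
  have "h > 1"
    unfolding h_def using assms(1) P by (rule h_fun_gt_one)
  then have "T_fun h / h < 1/4"
    using T_fun_less_quarter[of h] by (simp add: field_simps)
  then have "T_fun h / h + T_deriv h < 1/4 + 1/2"
    using T_deriv_less_half[OF \<open>h > 1\<close>] by linarith
  moreover have "sqrt (D^2 + (norm m)^2) \<ge> 0"
    by simp
  then have "P > 0"
    using P by linarith
  ultimately have "P * (T_fun h / h + T_deriv h) < P * (3/4)"
    by (intro mult_strict_left_mono) auto
  then have "2*P - E - P * (T_fun h / h + T_deriv h) > 0"
    using assms(3) \<open>P > 0\<close> by linarith
  with S_fun_has_real_derivative[OF assms(1) P, of E, folded h_def] show ?thesis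
    by blast
qed

lemma Newton_step_increases:
  fixes f :: "real \<Rightarrow> real"
  assumes "f x < 0" and "(f has_real_derivative y) (at x)" and "y > 0"
  shows "x - f x / deriv f x > x"
proof -
  have "deriv f x = y"
    using assms(2) by (rule DERIV_imp_deriv)
  then show ?thesis
    using assms(1,3) by (simp add: divide_neg_pos)
qed

theorem lemma2:
  fixes D E Pstar Pr :: real and m :: "real^'n"
  assumes "D > 0" and "E - sqrt (D^2 + (norm m)^2) > 0"
    and "Pstar > E" and "S_fun D m E Pstar = 0"
    and "E \<le> Pr" and "Pr < Pstar"
  shows "Pr - S_fun D m E Pr / deriv (S_fun D m E) Pr > Pr"
proof -
  have S'_pos: "\<exists>y. (S_fun D m E has_real_derivative y) (at P) \<and> y > 0" if "E \<le> P" for P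
    using assms(1,2) that by (intro S_fun_has_positive_derivative) auto
  have "S_fun D m E Pr < S_fun D m E Pstar"
    using assms(6) by (rule DERIV_pos_imp_increasing) (use assms(5) S'_pos in auto)
  then have "S_fun D m E Pr < 0"
    using assms(4) by simp
  with S'_pos[OF assms(5)] show ?thesis
    using Newton_step_increases by blast
qed

end
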